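(* Every continuous valuation on Johnstone's dcpo $\mathcal J$ (with its Scott topology) is point-continuous.
   Context: Johnstone's dcpo: $\mathcal J=\mathbb N\times(\mathbb N\cup\{\infty\})$ ordered by $(a,b)\le(c,d)$ iff either ($a=c$ and $b\le d$) or ($d=\infty$ and $b\le c$). A continuous valuation is a map $\nu:\mathcal OX\to[0,\infty]$ with $\nu(\emptyset)=0$, monotone, modular, and preserving directed suprema of opens. It is point-continuous if for every open $U$ and every real $r$ with $0\le r<\nu(U)$ there is a finite $A\subseteq U$ such that $\nu(V)>r$ for every open $V\supseteq A$. *)

theory Defs
  imports "HOL-Library.Extended_Nat" "HOL-Library.Extended_Nonnegative_Real"
begin

text \<open>Johnstone's dcpo: carrier nat \<times> enat (enat = nat extended by \<infinity>).\<close>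

type_synonym jpt = "nat \<times> enat"

definition jle :: "jpt \<Rightarrow> jpt \<Rightarrow> bool" where
  "jle p q \<longleftrightarrow> (case p of (a, b) \<Rightarrow> case q of (c, d) \<Rightarrow>
      (a = c \<and> b \<le> d) \<or> (d = \<infinity> \<and> b \<le> enat c))"

definition directed_rel :: "('a \<Rightarrow> 'a \<Rightarrow> bool) \<Rightarrow> 'a set \<Rightarrow> bool" where
  "directed_rel le D \<longleftrightarrow> D \<noteq> {} \<and> (\<forall>x\<in>D. \<forall>y\<in>D. \<exists>z\<in>D. le x z \<and> le y z)"

definition is_lub_rel :: "('a \<Rightarrow> 'a \<Rightarrow> bool) \<Rightarrow> 'a set \<Rightarrow> 'a \<Rightarrow> bool" where
  "is_lub_rel le D s \<longleftrightarrow> (\<forall>x\<in>D. le x s) \<and> (\<forall>u. (\<forall>x\<in>D. le x u) \<longrightarrow> le s u)"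

definition scott_open :: "('a \<Rightarrow> 'a \<Rightarrow> bool) \<Rightarrow> 'a set \<Rightarrow> bool" where
  "scott_open le U \<longleftrightarrow>
     (\<forall>x y. x \<in> U \<and> le x y \<longrightarrow> y \<in> U) \<and>
     (\<forall>D s. directed_rel le D \<and> is_lub_rel le D s \<and> s \<in> U \<longrightarrow> D \<inter> U \<noteq> {})"

definition continuous_valuation :: "('a set \<Rightarrow> bool) \<Rightarrow> ('a set \<Rightarrow> ennreal) \<Rightarrow> bool" where
  "continuous_valuation opn \<nu> \<longleftrightarrow>
     \<nu> {} = 0 \<and>
     (\<forall>U V. opn U \<and> opn V \<and> U \<subseteq> V \<longrightarrow> \<nu> U \<le> \<nu> V) \<and>
     (\<forall>U V. opn U \<and> opn V \<longrightarrow> \<nu> U + \<nu> V = \<nu> (U \<union> V) + \<nu> (U \<inter> V)) \<and>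
     (\<forall>\<D>. \<D> \<noteq> {} \<and> (\<forall>U\<in>\<D>. opn U) \<and>
           (\<forall>U\<in>\<D>. \<forall>V\<in>\<D>. \<exists>W\<in>\<D>. U \<subseteq> W \<and> V \<subseteq> W)
        \<longrightarrow> \<nu> (\<Union>\<D>) = (SUP U\<in>\<D>. \<nu> U))"

definition point_continuous :: "('a set \<Rightarrow> bool) \<Rightarrow> ('a set \<Rightarrow> ennreal) \<Rightarrow> bool" where
  "point_continuous opn \<nu> \<longleftrightarrow>
     (\<forall>U (r::real). opn U \<and> 0 \<le> r \<and> ennreal r < \<nu> U \<longrightarrow>
        (\<exists>A. finite A \<and> A \<subseteq> U \<and> (\<forall>V. opn V \<and> A \<subseteq> V \<longrightarrow> ennreal r < \<nu> V)))"

end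

theory Submission
  imports Defs
begin

text \<open>Nothing about Johnstone's dcpo beyond its countability is needed. Suppose every finite
  subset of a Scott-open set \<open>U\<close> had an open neighbourhood of measure at most \<open>r < \<nu> U\<close>.
  Enumerate \<open>U = {e 0, e 1, \<dots>}\<close> and pick opens \<open>V k \<supseteq> {e 0, \<dots>, e (k - 1)}\<close> with
  \<open>\<nu> (V k) \<le> r\<close>. Every point of \<open>U\<close> lies in all but finitely many \<open>W k = U \<inter> V k\<close>, and this makes
  the tail intersections \<open>X k = \<Inter>j. W (k + j)\<close> Scott-open: a directed set approaching a point of
  \<open>X k\<close> only has to enter finitely many of the \<open>W j\<close> separately. The \<open>X k\<close> increase to \<open>U\<close>,
  so Scott continuity of \<open>\<nu>\<close> gives \<open>\<nu> U = (SUP k. \<nu> (X k)) \<le> r\<close>, a contradiction.\<close>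

lemma scott_open_upward: "scott_open le U \<Longrightarrow> x \<in> U \<Longrightarrow> le x y \<Longrightarrow> y \<in> U"
  unfolding scott_open_def by blast

lemma scott_open_inaccessible:
  "scott_open le U \<Longrightarrow> directed_rel le D \<Longrightarrow> is_lub_rel le D s \<Longrightarrow> s \<in> U \<Longrightarrow> \<exists>d\<in>D. d \<in> U"
  unfolding scott_open_def by blast

lemma scott_open_Int:
  assumes U: "scott_open le U" and V: "scott_open le V"
  shows "scott_open le (U \<inter> V)"
  unfolding scott_open_def
proof (intro conjI allI impI)
  fix x y assume "x \<in> U \<inter> V \<and> le x y"
  then show "y \<in> U \<inter> V" using scott_open_upward[OF U] scott_open_upward[OF V] by blast
next
  fix D s assume Ds: "directed_rel le D \<and> is_lub_rel le D s \<and> s \<in> U \<inter> V"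
  then obtain a b where a: "a \<in> D" "a \<in> U" and b: "b \<in> D" "b \<in> V"
    using scott_open_inaccessible[OF U] scott_open_inaccessible[OF V] by blast
  then obtain z where "z \<in> D" "le a z" "le b z"
    using Ds unfolding directed_rel_def by blast
  then show "D \<inter> (U \<inter> V) \<noteq> {}"
    using a b scott_open_upward[OF U] scott_open_upward[OF V] by blast
qed

text \<open>No transitivity of \<open>le\<close> is available, so upper bounds of finite subsets of \<open>D\<close> are replaced
  by meeting finitely many upper sets simultaneously.\<close>

lemma directed_meets_Inter_upper_sets:
  assumes D: "directed_rel le D" and "finite \<S>"
    and upper: "\<forall>S\<in>\<S>. \<forall>x\<in>S. \<forall>y. le x y \<longrightarrow> y \<in> S"
    and meets: "\<forall>S\<in>\<S>. D \<inter> S \<noteq> {}"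
  shows "D \<inter> \<Inter>\<S> \<noteq> {}"
  using \<open>finite \<S>\<close> upper meets
proof (induction \<S> rule: finite_induct)
  case empty
  then show ?case using D unfolding directed_rel_def by simp
next
  case (insert S \<S>)
  have "D \<inter> \<Inter>\<S> \<noteq> {}"
    using insert.IH insert.prems by simp
  then obtain e where e: "e \<in> D" "e \<in> \<Inter>\<S>" by blast
  obtain d where d: "d \<in> D" "d \<in> S"
    using insert.prems(2) by blast
  obtain z where z: "z \<in> D" "le e z" "le d z"
    using D e(1) d(1) unfolding directed_rel_def by blast
  have "z \<in> S" "z \<in> \<Inter>\<S>"
    using insert.prems(1) d(2) e(2) z(2,3) by auto
  then show ?case using z(1) by blast
qed

lemma scott_open_INT_eventually:
  assumes W: "\<And>j. scott_open le (W j)" and U: "scott_open le U"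
    and INT_sub: "(\<Inter>j. W j) \<subseteq> U"
    and eventually_in: "\<forall>x\<in>U. \<forall>\<^sub>F j in sequentially. x \<in> W j"
  shows "scott_open le (\<Inter>j. W j)"
  unfolding scott_open_def
proof (intro conjI allI impI)
  fix x y assume "x \<in> (\<Inter>j. W j) \<and> le x y"
  then show "y \<in> (\<Inter>j. W j)" using scott_open_upward[OF W] by blast
next
  fix D s assume "directed_rel le D \<and> is_lub_rel le D s \<and> s \<in> (\<Inter>j. W j)"
  then have D: "directed_rel le D" and s: "is_lub_rel le D s" and s_W: "\<And>j. s \<in> W j"
    by auto
  obtain d where d: "d \<in> D" "d \<in> U"
    using scott_open_inaccessible[OF U D s] s_W INT_sub by blast
  then obtain K where K: "\<And>j. K \<le> j \<Longrightarrow> d \<in> W j"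
    using eventually_in unfolding eventually_sequentially by blast
  define \<S> where "\<S> = insert (\<Inter>j\<in>{K..}. W j) (W ` {..<K})"
  have W_meets: "D \<inter> W j \<noteq> {}" for j
    using scott_open_inaccessible[OF W D s s_W] by blast
  have "D \<inter> \<Inter>\<S> \<noteq> {}"
  proof (rule directed_meets_Inter_upper_sets)
    show "\<forall>S\<in>\<S>. \<forall>x\<in>S. \<forall>y. le x y \<longrightarrow> y \<in> S"
      unfolding \<S>_def using scott_open_upward[OF W] by auto
    show "\<forall>S\<in>\<S>. D \<inter> S \<noteq> {}"
      unfolding \<S>_def using d K W_meets by auto
  qed (use D \<S>_def in auto)
  moreover have "\<Inter>\<S> \<subseteq> (\<Inter>j. W j)"
  proof
    fix x assume x: "x \<in> \<Inter>\<S>"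
    have "x \<in> W j" for j
      using x unfolding \<S>_def by (cases "j < K") auto
    then show "x \<in> (\<Inter>j. W j)" by blast
  qed
  ultimately show "D \<inter> (\<Inter>j. W j) \<noteq> {}" by blast
qed

lemma continuous_valuation_mono:
  "continuous_valuation opn \<nu> \<Longrightarrow> opn U \<Longrightarrow> opn V \<Longrightarrow> U \<subseteq> V \<Longrightarrow> \<nu> U \<le> \<nu> V"
  unfolding continuous_valuation_def by blast

lemma continuous_valuation_incseq:
  assumes cv: "continuous_valuation opn \<nu>" and X: "\<And>k. opn (X k)" and "incseq X"
  shows "\<nu> (\<Union>k. X k) = (SUP k. \<nu> (X k))"
proof -
  have "\<forall>Y\<in>range X. \<forall>Z\<in>range X. \<exists>T\<in>range X. Y \<subseteq> T \<and> Z \<subseteq> T"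
    using \<open>incseq X\<close> unfolding incseq_def by (metis rangeE rangeI max.cobounded1 max.cobounded2)
  moreover have "\<forall>Y\<in>range X. opn Y" using X by blast
  ultimately show ?thesis
    using cv unfolding continuous_valuation_def by (simp add: image_image)
qed

lemma scott_open_incseq_exhaustion:
  assumes U: "scott_open le U" and V: "\<And>k. scott_open le (V k)"
    and eventually_V: "\<forall>x\<in>U. \<forall>\<^sub>F k in sequentially. x \<in> V k"
  obtains X where "\<And>k. scott_open le (X k)" "incseq X" "\<And>k. X k \<subseteq> V k" "(\<Union>k. X k) = U"
proof
  define W where "W k = U \<inter> V k" for k
  define X where "X k = (\<Inter>j. W (k + j))" for k
  have eventually_W: "\<forall>\<^sub>F j in sequentially. x \<in> W (k + j)" if "x \<in> U" for x k
  proof -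
    have "\<forall>\<^sub>F j in sequentially. x \<in> W j"
      using eventually_V that unfolding W_def by auto
    then have "\<forall>\<^sub>F j in sequentially. x \<in> W (j + k)"
      by (rule sequentially_offset)
    then show ?thesis by (simp add: add.commute)
  qed
  show "scott_open le (X k)" for k
    unfolding X_def
  proof (rule scott_open_INT_eventually[OF _ U])
    show "scott_open le (W (k + j))" for j
      unfolding W_def using scott_open_Int[OF U V] .
  qed (use eventually_W in \<open>auto simp: W_def\<close>)
  show "incseq X"
  proof (rule incseq_SucI)
    fix k
    show "X k \<subseteq> X (Suc k)"
    proof
      fix x assume "x \<in> X k"
      then have "x \<in> W (k + Suc j)" for j unfolding X_def by blast
      then show "x \<in> X (Suc k)" unfolding X_def by simp
    qed
  qed
  show "X k \<subseteq> V k" for k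
  proof -
    have "X k \<subseteq> W (k + 0)" unfolding X_def by blast
    then show ?thesis unfolding W_def by simp
  qed
  show "(\<Union>k. X k) = U"
  proof
    show "(\<Union>k. X k) \<subseteq> U" unfolding X_def W_def by blast
    show "U \<subseteq> (\<Union>k. X k)"
    proof
      fix x assume "x \<in> U"
      then obtain K where "\<And>j. K \<le> j \<Longrightarrow> x \<in> W j"
        using eventually_V unfolding W_def eventually_sequentially by blast
      then have "x \<in> X K" unfolding X_def by simp
      then show "x \<in> (\<Union>k. X k)" by blast
    qed
  qed
qed

lemma point_continuous_at_countable_open:
  assumes cv: "continuous_valuation (scott_open le) \<nu>"
    and U: "scott_open le U" and "countable U" and rU: "ennreal r < \<nu> U"
  shows "\<exists>A. finite A \<and> A \<subseteq> U \<and> (\<forall>V. scott_open le V \<and> A \<subseteq> V \<longrightarrow> ennreal r < \<nu> V)"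
proof (rule ccontr)
  assume "\<not> ?thesis"
  then have small: "\<exists>V. scott_open le V \<and> A \<subseteq> V \<and> \<nu> V \<le> ennreal r"
    if "finite A" "A \<subseteq> U" for A
    using that by (auto simp: not_less)
  have "U \<noteq> {}"
    using rU cv unfolding continuous_valuation_def by auto
  define e where "e = from_nat_into U"
  have e: "range e = U"
    unfolding e_def using \<open>U \<noteq> {}\<close> \<open>countable U\<close> by simp
  have "\<forall>k. \<exists>V. scott_open le V \<and> e ` {..<k} \<subseteq> V \<and> \<nu> V \<le> ennreal r"
  proof
    fix k
    have "e ` {..<k} \<subseteq> U" using e by blast
    then show "\<exists>V. scott_open le V \<and> e ` {..<k} \<subseteq> V \<and> \<nu> V \<le> ennreal r"
      using small by blast
  qed
  then obtain V where V_open: "\<And>k. scott_open le (V k)" and e_V: "\<And>k. e ` {..<k} \<subseteq> V k"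
    and V_small: "\<And>k. \<nu> (V k) \<le> ennreal r"
    by metis
  have eventually_V: "\<forall>x\<in>U. \<forall>\<^sub>F k in sequentially. x \<in> V k"
  proof
    fix x assume "x \<in> U"
    then obtain n where "x = e n" using e by blast
    then have "\<forall>k\<ge>Suc n. x \<in> V k" using e_V by (auto simp: Suc_le_eq image_subset_iff)
    then show "\<forall>\<^sub>F k in sequentially. x \<in> V k"
      unfolding eventually_sequentially by blast
  qed
  obtain X where X_open: "\<And>k. scott_open le (X k)" and "incseq X"
    and X_V: "\<And>k. X k \<subseteq> V k" and X_U: "(\<Union>k. X k) = U"
    using scott_open_incseq_exhaustion[of le U V, OF U V_open eventually_V] by blast
  have "\<nu> U = (SUP k. \<nu> (X k))"
    using continuous_valuation_incseq[OF cv X_open \<open>incseq X\<close>] X_U by simp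
  also have "\<dots> \<le> ennreal r"
    using continuous_valuation_mono[OF cv X_open V_open X_V] V_small
    by (meson SUP_least order_trans)
  finally show False using rU by simp
qed

lemma point_continuous_scott_countable:
  fixes le :: "'a::countable \<Rightarrow> 'a \<Rightarrow> bool"
  assumes "continuous_valuation (scott_open le) \<nu>"
  shows "point_continuous (scott_open le) \<nu>"
  unfolding point_continuous_def
  using point_continuous_at_countable_open[OF assms] by simp

theorem corollary3p10:
  fixes \<nu> :: "jpt set \<Rightarrow> ennreal"
  assumes "continuous_valuation (scott_open jle) \<nu>"
  shows "point_continuous (scott_open jle) \<nu>"
  using point_continuous_scott_countable[OF assms] .

end
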